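(* Let $n,m\ge 1$, let $\vec k=(k_1,\dots,k_m)$ be a vector of positive integer capacities with $k_1+\dots+k_m<n$, let $\vec x\in[0,1]^n$ and $\vec y\in[0,1]^m$. Then the First-Come-First-Served game associated with $\vec x$, $\vec y$ and $\vec k$ admits at least one pure Nash Equilibrium.
   Context: There are $n$ agents with positions $\vec x=(x_1,\dots,x_n)\in[0,1]^n$ and $m$ facilities with capacities $k_1,\dots,k_m$; $\vec y=(y_1,\dots,y_m)$ is a facility location, $y_j$ being the position of the facility of capacity $k_j$. A fixed total priority order on the agents is used to break ties. The First-Come-First-Served (FCFS) game induced by $(\vec x,\vec y)$: each agent $i$ chooses a pure strategy $s_i\in\{1,\dots,m\}$; for a profile $\vec s$, let $\mathcal S_j$ be the set of agents choosing $j$, and let $T_j\subseteq\mathcal S_j$ consist of the $\min(k_j,|\mathcal S_j|)$ agents of $\mathcal S_j$ with the smallest distances $|x_i-y_j|$ (ties broken by the priority order). The utility of agent $i$ is $u_i(\vec x,\vec y;\vec s)=1-|x_i-y_j|$ if $i\in T_j$ for some $j$, and $0$ otherwise. A pure Nash Equilibrium is a profile from which no agent can strictly increase its utility by unilaterally changing its strategy. *)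

theory Defs
  imports Complex_Main
begin

text \<open>Agents are 0..<n, facilities 0..<m.  x i = position of agent i,
 y j = position of facility j, k j = capacity of facility j.
 The priority order is given by an injective rank function prio on the agents:
 agent a has higher priority than agent b iff prio a < prio b.\<close>

definition beats :: "(nat \<Rightarrow> real) \<Rightarrow> (nat \<Rightarrow> real) \<Rightarrow> (nat \<Rightarrow> nat) \<Rightarrow> nat \<Rightarrow> nat \<Rightarrow> nat \<Rightarrow> bool" where
  "beats x y prio j a b \<longleftrightarrow>
     \<bar>x a - y j\<bar> < \<bar>x b - y j\<bar> \<or> (\<bar>x a - y j\<bar> = \<bar>x b - y j\<bar> \<and> prio a < prio b)"

definition served :: "nat \<Rightarrow> (nat \<Rightarrow> real) \<Rightarrow> (nat \<Rightarrow> real) \<Rightarrow> (nat \<Rightarrow> nat) \<Rightarrow> (nat \<Rightarrow> nat)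
     \<Rightarrow> (nat \<Rightarrow> nat) \<Rightarrow> nat \<Rightarrow> bool" where
  "served n x y k prio s i \<longleftrightarrow>
     card {a. a < n \<and> s a = s i \<and> beats x y prio (s i) a i} < k (s i)"

definition utility :: "nat \<Rightarrow> (nat \<Rightarrow> real) \<Rightarrow> (nat \<Rightarrow> real) \<Rightarrow> (nat \<Rightarrow> nat) \<Rightarrow> (nat \<Rightarrow> nat)
     \<Rightarrow> (nat \<Rightarrow> nat) \<Rightarrow> nat \<Rightarrow> real" where
  "utility n x y k prio s i =
     (if served n x y k prio s i then 1 - \<bar>x i - y (s i)\<bar> else 0)"

definition pure_NE :: "nat \<Rightarrow> nat \<Rightarrow> (nat \<Rightarrow> real) \<Rightarrow> (nat \<Rightarrow> real) \<Rightarrow> (nat \<Rightarrow> nat)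
     \<Rightarrow> (nat \<Rightarrow> nat) \<Rightarrow> (nat \<Rightarrow> nat) \<Rightarrow> bool" where
  "pure_NE n m x y k prio s \<longleftrightarrow>
     (\<forall>i<n. s i < m) \<and>
     (\<forall>i<n. \<forall>j<m. utility n x y k prio (s(i := j)) i \<le> utility n x y k prio s i)"

end

theory Submission
  imports Defs "HOL-Library.Product_Lexorder"
begin

text \<open>Run the greedy matching: as long as some facility has free capacity, assign the
  unassigned agent and non-full facility of least distance (ties broken by priority) to each
  other. This terminates with all facilities full because the total capacity is less than the
  number of agents. Each assigned agent then outranks everyone still unassigned at its own
  facility, and every facility it strictly prefers was filled earlier by agents outranking it.
  Sending the remaining agents anywhere gives a Nash equilibrium: assigned agents are served at
  their facility and can only deviate to a worse facility or to one where they are not served,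
  and unassigned agents are outranked at every facility by a full set of assigned agents.\<close>

lemma beats_asym: "beats x y prio j a b \<Longrightarrow> \<not> beats x y prio j b a"
  unfolding beats_def by auto

lemma beats_irrefl: "\<not> beats x y prio j a a"
  unfolding beats_def by auto

lemma beats_iff_lex_less:
  "beats x y prio j a b \<longleftrightarrow> (\<bar>x a - y j\<bar>, prio a) < (\<bar>x b - y j\<bar>, prio b)"
  unfolding beats_def by auto

lemma utility_nonneg:
  "\<bar>x i - y (s i)\<bar> \<le> 1 \<Longrightarrow> 0 \<le> utility n x y k prio s i"
  unfolding utility_def by auto

lemma utility_le_max: "utility n x y k prio s i \<le> max 0 (1 - \<bar>x i - y (s i)\<bar>)"
  unfolding utility_def by auto

lemma utility_eq_0_if_outranked:
  assumes "B \<subseteq> {a. a < n \<and> s a = s i \<and> beats x y prio (s i) a i}"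
    and "k (s i) \<le> card B"
  shows "utility n x y k prio s i = 0"
proof -
  have "card B \<le> card {a. a < n \<and> s a = s i \<and> beats x y prio (s i) a i}"
    using assms(1) by (intro card_mono) auto
  then show ?thesis
    using assms(2) unfolding utility_def served_def by auto
qed

lemma utility_eq_if_few_outrank:
  assumes "{a. a < n \<and> s a = s i \<and> beats x y prio (s i) a i} \<subseteq> B"
    and "finite B" and "card B < k (s i)"
  shows "utility n x y k prio s i = 1 - \<bar>x i - y (s i)\<bar>"
proof -
  have "card {a. a < n \<and> s a = s i \<and> beats x y prio (s i) a i} \<le> card B"
    using assms(1,2) by (rule card_mono[rotated])
  then show ?thesis
    using assms(3) unfolding utility_def served_def by auto
qed

definition occupants :: "nat set \<Rightarrow> (nat \<Rightarrow> nat) \<Rightarrow> nat \<Rightarrow> nat set" where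
  "occupants A s j = {a \<in> A. s a = j}"

lemma occupants_insert_upd:
  "i \<notin> A \<Longrightarrow> occupants (insert i A) (s(i := j)) j' =
     (if j' = j then insert i (occupants A s j') else occupants A s j')"
  unfolding occupants_def by auto

lemma card_eq_sum_card_occupants:
  assumes "finite A" and "\<forall>a\<in>A. s a < m"
  shows "card A = (\<Sum>j<m. card (occupants A s j))"
proof -
  have "A = (\<Union>j<m. occupants A s j)"
    using assms(2) unfolding occupants_def by auto
  moreover have "card (\<Union>j<m. occupants A s j) = (\<Sum>j<m. card (occupants A s j))"
    using assms(1) by (intro card_UN_disjoint) (auto simp: occupants_def)
  ultimately show ?thesis by simp
qed

locale fcfs_game =
  fixes n m :: nat and x y :: "nat \<Rightarrow> real" and k prio :: "nat \<Rightarrow> nat"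
begin

definition greedy_state :: "nat set \<Rightarrow> (nat \<Rightarrow> nat) \<Rightarrow> bool" where
  "greedy_state A s \<longleftrightarrow>
     A \<subseteq> {..<n} \<and> (\<forall>a\<in>A. s a < m) \<and> (\<forall>j<m. card (occupants A s j) \<le> k j) \<and>
     (\<forall>a\<in>A. \<forall>u<n. u \<notin> A \<longrightarrow> beats x y prio (s a) a u) \<and>
     (\<forall>a\<in>A. \<forall>j<m. \<bar>x a - y j\<bar> < \<bar>x a - y (s a)\<bar> \<longrightarrow>
        card (occupants A s j) = k j \<and> (\<forall>b\<in>occupants A s j. beats x y prio j b a))"

lemma greedy_state_empty: "greedy_state {} s"
  unfolding greedy_state_def occupants_def by simp

lemma greedy_state_insert:
  assumes st: "greedy_state A s"
    and i: "i < n" "i \<notin> A" and j: "j < m" "card (occupants A s j) < k j"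
    and outranks_rest: "\<And>u. u < n \<Longrightarrow> u \<notin> A \<Longrightarrow> u \<noteq> i \<Longrightarrow> beats x y prio j i u"
    and closest: "\<And>j'. j' < m \<Longrightarrow> card (occupants A s j') < k j' \<Longrightarrow>
                    \<bar>x i - y j\<bar> \<le> \<bar>x i - y j'\<bar>"
  shows "greedy_state (insert i A) (s(i := j))"
proof -
  from st have A: "A \<subseteq> {..<n}" and s: "\<forall>a\<in>A. s a < m"
    and cap: "\<forall>j<m. card (occupants A s j) \<le> k j"
    and outranks: "\<forall>a\<in>A. \<forall>u<n. u \<notin> A \<longrightarrow> beats x y prio (s a) a u"
    and preferred: "\<forall>a\<in>A. \<forall>j<m. \<bar>x a - y j\<bar> < \<bar>x a - y (s a)\<bar> \<longrightarrow>
        card (occupants A s j) = k j \<and> (\<forall>b\<in>occupants A s j. beats x y prio j b a)"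
    unfolding greedy_state_def by auto
  have occ: "occupants (insert i A) (s(i := j)) j' =
      (if j' = j then insert i (occupants A s j') else occupants A s j')" for j'
    using i(2) by (rule occupants_insert_upd)
  have fin: "finite (occupants A s j')" for j'
    using A by (auto simp: occupants_def intro: finite_subset)
  have i_notin: "i \<notin> occupants A s j'" for j'
    using i(2) by (simp add: occupants_def)
  have full_unchanged: "occupants (insert i A) (s(i := j)) j' = occupants A s j'"
    if "card (occupants A s j') = k j'" for j'
    using occ j(2) that by auto
  have preferred_new: "card (occupants A s j') = k j' \<and>
      (\<forall>b\<in>occupants A s j'. beats x y prio j' b a)"
    if a: "a \<in> insert i A" and j': "j' < m"
      and closer: "\<bar>x a - y j'\<bar> < \<bar>x a - y ((s(i := j)) a)\<bar>" for a j'
  proof (cases "a = i")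
    case True
    then have "\<not> card (occupants A s j') < k j'"
      using closest j' closer by fastforce
    then have "card (occupants A s j') = k j'"
      using cap j' by (simp add: le_antisym not_less)
    moreover have "\<forall>b\<in>occupants A s j'. beats x y prio j' b a"
      using outranks i True by (auto simp: occupants_def)
    ultimately show ?thesis ..
  next
    case False
    then show ?thesis
      using preferred a j' closer by auto
  qed
  have "insert i A \<subseteq> {..<n}"
    using A i(1) by simp
  moreover have "\<forall>a\<in>insert i A. (s(i := j)) a < m"
    using s j(1) by simp
  moreover have "\<forall>j'<m. card (occupants (insert i A) (s(i := j)) j') \<le> k j'"
    using cap j fin i_notin by (simp add: occ)
  moreover have "\<forall>a\<in>insert i A. \<forall>u<n. u \<notin> insert i A \<longrightarrow> beats x y prio ((s(i := j)) a) a u"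
    using outranks outranks_rest i(2) by auto
  moreover have "\<forall>a\<in>insert i A. \<forall>j'<m. \<bar>x a - y j'\<bar> < \<bar>x a - y ((s(i := j)) a)\<bar> \<longrightarrow>
      card (occupants (insert i A) (s(i := j)) j') = k j' \<and>
      (\<forall>b\<in>occupants (insert i A) (s(i := j)) j'. beats x y prio j' b a)"
    using preferred_new full_unchanged by simp
  ultimately show ?thesis
    unfolding greedy_state_def by blast
qed

lemma greedy_state_extend:
  assumes st: "greedy_state A s" and j0: "j0 < m" "card (occupants A s j0) < k j0"
    and capacity: "(\<Sum>j<m. k j) < n" and prio: "inj_on prio {..<n}"
  obtains i j where "i < n" "i \<notin> A" "greedy_state (insert i A) (s(i := j))"
proof -
  from st have A: "A \<subseteq> {..<n}" and s: "\<forall>a\<in>A. s a < m"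
    and cap: "\<forall>j<m. card (occupants A s j) \<le> k j"
    unfolding greedy_state_def by auto
  have "card A = (\<Sum>j<m. card (occupants A s j))"
    using A s by (intro card_eq_sum_card_occupants) (auto intro: finite_subset)
  also have "\<dots> \<le> (\<Sum>j<m. k j)"
    using cap by (intro sum_mono) simp
  finally have "A \<noteq> {..<n}"
    using capacity by auto
  then obtain u where u: "u < n" "u \<notin> A"
    using A by blast
  define P where "P = {(i, j). i < n \<and> i \<notin> A \<and> j < m \<and> card (occupants A s j) < k j}"
  define key where "key = (\<lambda>(i, j). (\<bar>x i - y j\<bar>, prio i))"
  have "finite P"
    unfolding P_def by (rule finite_subset[of _ "{..<n} \<times> {..<m}"]) auto
  moreover have "(u, j0) \<in> P"
    using u j0 unfolding P_def by simp
  ultimately obtain i j where ij: "(i, j) \<in> P" and least: "\<And>q. q \<in> P \<Longrightarrow> key (i, j) \<le> key q"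
    by (metis arg_min_if_finite(1) arg_min_least empty_iff surj_pair)
  from ij have i: "i < n" "i \<notin> A" and j: "j < m" "card (occupants A s j) < k j"
    unfolding P_def by auto
  have "beats x y prio j i u'" if "u' < n" "u' \<notin> A" "u' \<noteq> i" for u'
  proof -
    have "key (i, j) \<le> key (u', j)"
      using least that j unfolding P_def by simp
    moreover have "prio i \<noteq> prio u'"
      using prio i(1) that by (auto dest: inj_onD)
    ultimately show ?thesis
      unfolding beats_iff_lex_less key_def by (simp add: order.strict_iff_order)
  qed
  moreover have "\<bar>x i - y j\<bar> \<le> \<bar>x i - y j'\<bar>" if "j' < m" "card (occupants A s j') < k j'" for j'
    using least[of "(i, j')"] that i unfolding P_def key_def by auto
  ultimately have "greedy_state (insert i A) (s(i := j))"
    using greedy_state_insert[OF st i j] by blast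
  with i that show ?thesis by blast
qed

lemma greedy_state_full_exists:
  assumes capacity: "(\<Sum>j<m. k j) < n" and prio: "inj_on prio {..<n}"
  obtains A s where "greedy_state A s" "\<forall>j<m. card (occupants A s j) = k j"
proof -
  have "\<exists>A' s'. greedy_state A' s' \<and> (\<forall>j<m. card (occupants A' s' j) = k j)"
    if "greedy_state A s" for A s
    using that
  proof (induction "n - card A" arbitrary: A s rule: less_induct)
    case less
    show ?case
    proof (cases "\<forall>j<m. card (occupants A s j) = k j")
      case True
      with less.prems show ?thesis by blast
    next
      case False
      then obtain j0 where "j0 < m" "card (occupants A s j0) < k j0"
        using less.prems unfolding greedy_state_def by (meson le_neq_implies_less)
      then obtain i j where i: "i < n" "i \<notin> A" and st: "greedy_state (insert i A) (s(i := j))"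
        using greedy_state_extend[OF less.prems _ _ capacity prio] by metis
      have A: "A \<subseteq> {..<n}"
        using less.prems unfolding greedy_state_def by simp
      then have "card A < n"
        using psubset_card_mono[of "{..<n}" A] i by auto
      then have "n - card (insert i A) < n - card A"
        using A i(2) by (simp add: finite_subset)
      then show ?thesis
        using less.hyps st by blast
    qed
  qed
  then show ?thesis
    using greedy_state_empty that by blast
qed

lemma utility_in_full_greedy_state:
  assumes st: "greedy_state A s" and full: "\<forall>j<m. card (occupants A s j) = k j"
    and t: "\<forall>a\<in>A. t a = s a" and i: "i \<in> A"
  shows "utility n x y k prio t i = 1 - \<bar>x i - y (s i)\<bar>"
proof -
  from st have A: "A \<subseteq> {..<n}" and "s i < m"
    and outranks: "\<forall>a\<in>A. \<forall>u<n. u \<notin> A \<longrightarrow> beats x y prio (s a) a u"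
    using i unfolding greedy_state_def by auto
  have fin: "finite (occupants A s (s i))"
    using A by (auto simp: occupants_def intro: finite_subset)
  have "{a. a < n \<and> t a = t i \<and> beats x y prio (t i) a i} \<subseteq> occupants A s (s i) - {i}"
  proof
    fix a
    assume a: "a \<in> {a. a < n \<and> t a = t i \<and> beats x y prio (t i) a i}"
    have "a \<in> A"
    proof (rule ccontr)
      assume "a \<notin> A"
      then have "beats x y prio (s i) i a"
        using outranks i a by simp
      then show False
        using a t i beats_asym by fastforce
    qed
    then show "a \<in> occupants A s (s i) - {i}"
      using a t i beats_irrefl by (fastforce simp: occupants_def)
  qed
  moreover have "card (occupants A s (s i) - {i}) < card (occupants A s (s i))"
    using fin i by (intro card_Diff1_less) (simp_all add: occupants_def)
  then have "card (occupants A s (s i) - {i}) < k (t i)"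
    using full \<open>s i < m\<close> t i by simp
  ultimately show ?thesis
    using utility_eq_if_few_outrank fin t i by fastforce
qed

lemma utility_deviation_to_outranking_facility:
  assumes st: "greedy_state A s" and full: "\<forall>j<m. card (occupants A s j) = k j"
    and t: "\<forall>a\<in>A. t a = s a" and j: "j < m" and i: "i \<notin> occupants A s j"
    and outranked: "\<forall>b\<in>occupants A s j. beats x y prio j b i"
  shows "utility n x y k prio (t(i := j)) i = 0"
proof (rule utility_eq_0_if_outranked)
  have "A \<subseteq> {..<n}"
    using st unfolding greedy_state_def by simp
  then show "occupants A s j \<subseteq>
      {a. a < n \<and> (t(i := j)) a = (t(i := j)) i \<and> beats x y prio ((t(i := j)) i) a i}"
    using t i outranked by (auto simp: occupants_def)
  show "k ((t(i := j)) i) \<le> card (occupants A s j)"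
    using full j by simp
qed

lemma pure_NE_of_full_greedy_state:
  assumes st: "greedy_state A s" and full: "\<forall>j<m. card (occupants A s j) = k j"
    and "0 < m" and near: "\<forall>i<n. \<forall>j<m. \<bar>x i - y j\<bar> \<le> 1"
  shows "pure_NE n m x y k prio (\<lambda>a. if a \<in> A then s a else 0)"
proof -
  define t where "t = (\<lambda>a. if a \<in> A then s a else 0)"
  from st have s: "\<forall>a\<in>A. s a < m"
    and outranks: "\<forall>a\<in>A. \<forall>u<n. u \<notin> A \<longrightarrow> beats x y prio (s a) a u"
    and preferred: "\<forall>a\<in>A. \<forall>j<m. \<bar>x a - y j\<bar> < \<bar>x a - y (s a)\<bar> \<longrightarrow>
        card (occupants A s j) = k j \<and> (\<forall>b\<in>occupants A s j. beats x y prio j b a)"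
    unfolding greedy_state_def by auto
  have t_A: "\<forall>a\<in>A. t a = s a"
    unfolding t_def by simp
  have t_m: "\<forall>i<n. t i < m"
    using s \<open>0 < m\<close> unfolding t_def by simp
  have "utility n x y k prio (t(i := j)) i \<le> utility n x y k prio t i" if i: "i < n" and j: "j < m" for i j
  proof (cases "i \<in> A \<and> \<bar>x i - y (s i)\<bar> \<le> \<bar>x i - y j\<bar>")
    case True
    have "utility n x y k prio (t(i := j)) i \<le> max 0 (1 - \<bar>x i - y j\<bar>)"
      using utility_le_max[of n x y k prio "t(i := j)" i] by simp
    also have "\<dots> \<le> 1 - \<bar>x i - y (s i)\<bar>"
      using True near i s by auto
    also have "\<dots> = utility n x y k prio t i"
      using utility_in_full_greedy_state[OF st full t_A] True by simp
    finally show ?thesis .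
  next
    case False
    have "i \<notin> occupants A s j \<and> (\<forall>b\<in>occupants A s j. beats x y prio j b i)"
    proof (cases "i \<in> A")
      case True
      with False have "\<bar>x i - y j\<bar> < \<bar>x i - y (s i)\<bar>"
        by simp
      then show ?thesis
        using preferred True j by (auto simp: occupants_def)
    next
      case False
      then show ?thesis
        using outranks i by (auto simp: occupants_def)
    qed
    then have "utility n x y k prio (t(i := j)) i = 0"
      using utility_deviation_to_outranking_facility[OF st full t_A j] by blast
    moreover have "0 \<le> utility n x y k prio t i"
      using utility_nonneg near i t_m by blast
    ultimately show ?thesis
      by simp
  qed
  with t_m show ?thesis
    unfolding pure_NE_def t_def by blast
qed

end

theorem theorem1:
  fixes n m :: nat and x y :: "nat \<Rightarrow> real" and k prio :: "nat \<Rightarrow> nat"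
  assumes "n \<ge> 1" and "m \<ge> 1"
    and "\<forall>j<m. k j > 0"
    and "(\<Sum>j<m. k j) < n"
    and "\<forall>i<n. x i \<in> {0..1}"
    and "\<forall>j<m. y j \<in> {0..1}"
    and "inj_on prio {..<n}"
  shows "\<exists>s. pure_NE n m x y k prio s"
proof -
  obtain A s where "fcfs_game.greedy_state n m x y k prio A s"
    and "\<forall>j<m. card (occupants A s j) = k j"
    using fcfs_game.greedy_state_full_exists assms(4,7) by blast
  moreover have "\<forall>i<n. \<forall>j<m. \<bar>x i - y j\<bar> \<le> 1"
    using assms(5,6) by fastforce
  ultimately have "pure_NE n m x y k prio (\<lambda>a. if a \<in> A then s a else 0)"
    using fcfs_game.pure_NE_of_full_greedy_state assms(2) by simp
  then show ?thesis by blast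
qed

end
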